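(* Let $d\in\mathbb N$, $\varepsilon\in(0,1]$, and let $h=h(d,\varepsilon)$ be the height of Thiémard's partition as defined in the context. Let $r\in\{1,\dots,h\}$ and $\boldsymbol i,\boldsymbol j\in S^r$ with $i_\nu\le j_\nu$ for $\nu=1,\dots,r$, and assume both $Q^{(r)}_{\boldsymbol i}$ and $Q^{(r)}_{\boldsymbol j}$ are generated in the decomposition process. Then $$W(Q^{(r)}_{\boldsymbol i})\ge W(Q^{(r)}_{\boldsymbol j}),$$ and, if $W(Q^{(r)}_{\boldsymbol j})>\varepsilon$, $$\delta^{Q^{(r)}_{\boldsymbol i}}\ge \delta^{Q^{(r)}_{\boldsymbol j}}.$$ The first inequality is strict if and only if $i_\nu<j_\nu$ for some $\nu\in\{1,\dots,r-1\}$; the second inequality is strict if and only if $i_\nu<j_\nu$ for some $\nu\in\{1,\dots,r\}$.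
   Context: Fix $d\in\mathbb N$ and $\varepsilon\in(0,1]$. For $x,y\in[0,1]^d$ write $[x,y)=\prod_{i=1}^d[x_i,y_i)$ and define the weight $W([x,y))=\prod_{i=1}^d y_i-\prod_{i=1}^d x_i$. Thiémard's decomposition process generates boxes, each with a type in $\{1,\dots,d+1\}$. It starts with $I^d=[0,1)^d=[(0,\dots,0),(1,\dots,1))$, of type $1$. Whenever a generated box $P=[\alpha,\beta)$ has type $j\le d$ and $W(P)>\varepsilon$, it is decomposed (procedure DECOMPOSE$(P,j)$) as follows: put $$\delta^P=\left(\frac{\prod_{i=1}^d\beta_i-\varepsilon}{\prod_{i=1}^{j-1}\alpha_i\prod_{i=j}^d\beta_i}\right)^{1/(d-j+1)},\qquad \gamma^P_i=\alpha_i\ (i<j),\quad \gamma^P_i=\delta^P\beta_i\ (i\ge j).$$ The children of $P$ are the boxes $Q^P_k=[a^{(k)},b^{(k)})$ for $k=j,\dots,d$, where $a^{(k)}_i=\gamma^P_i$ for $i<k$, $a^{(k)}_i=\alpha_i$ for $i\ge k$, $b^{(k)}_k=\gamma^P_k$, $b^{(k)}_i=\beta_i$ for $i\neq k$; the box $Q^P_k$ has type $k$. In addition $P$ has the child $Q^P_{d+1}=[\gamma^P,\beta)$ of type $d+1$. A generated box of type $d+1$ or of weight at most $\varepsilon$ is not decomposed. (Known facts from Thiémard: $\delta^P\in(0,1)$; the process terminates after finitely many steps; $W(Q^P_{d+1})=\varepsilon$ and $W(Q^P_k)=\delta^PW(P)$ for $j\le k\le d$.) Indexing: for $r\in\mathbb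 N$ let $S^r=\{\boldsymbol i\in\mathbb N^r: 1\le i_1\le i_2\le\dots\le i_r\le d\}$, $S^0=\{0\}$, and $\mathbf 1_r=(1,\dots,1)\in\mathbb N^r$. Put $Q^{(0)}_0=I^d$, $Q^{(1)}_{j_1}=Q^{I^d}_{j_1}$ ($j_1=1,\dots,d$, defined when $W(I^d)>\varepsilon$), and for $\boldsymbol j\in S^r$ with $Q^{(r)}_{\boldsymbol j}$ generated and $W(Q^{(r)}_{\boldsymbol j})>\varepsilon$, $Q^{(r+1)}_{(\boldsymbol j,j_{r+1})}=Q^{Q^{(r)}_{\boldsymbol j}}_{j_{r+1}}$ for $j_{r+1}=j_r,\dots,d$. The height $h=h(d,\varepsilon)$ of the partition is $0$ if $W(I^d)\le\varepsilon$, and otherwise the largest $h\in\mathbb N$ such that there is $\boldsymbol j\in S^{h-1}$ with $Q^{(h-1)}_{\boldsymbol j}$ generated and $W(Q^{(h-1)}_{\boldsymbol j})>\varepsilon$. *)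

theory Defs
  imports Complex_Main
begin

text \<open>Boxes [x,y) in [0,1]^d are represented by pairs (x,y) of functions nat => real,
  where only the coordinates 1..d are relevant.\<close>

type_synonym box = "(nat \<Rightarrow> real) \<times> (nat \<Rightarrow> real)"

definition W :: "nat \<Rightarrow> box \<Rightarrow> real" where
  "W d P = (\<Prod>i\<in>{1..d}. snd P i) - (\<Prod>i\<in>{1..d}. fst P i)"

definition unit_box :: box where
  "unit_box = ((\<lambda>_. 0), (\<lambda>_. 1))"

definition delta :: "nat \<Rightarrow> real \<Rightarrow> nat \<Rightarrow> box \<Rightarrow> real" where
  "delta d eps j P =
     root (d - j + 1)
       (((\<Prod>i\<in>{1..d}. snd P i) - eps) /
        ((\<Prod>i\<in>{1..<j}. fst P i) * (\<Prod>i\<in>{j..d}. snd P i)))"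

definition gamma :: "nat \<Rightarrow> real \<Rightarrow> nat \<Rightarrow> box \<Rightarrow> nat \<Rightarrow> real" where
  "gamma d eps j P i = (if i < j then fst P i else delta d eps j P * snd P i)"

definition child :: "nat \<Rightarrow> real \<Rightarrow> nat \<Rightarrow> box \<Rightarrow> nat \<Rightarrow> box" where
  "child d eps j P k =
     ((\<lambda>i. if i < k then gamma d eps j P i else fst P i),
      (\<lambda>i. if i = k then gamma d eps j P k else snd P i))"

text \<open>Q^{(r)}_js together with its type (type of I^d is 1, type of Q^{(r)}_js is the last entry).
  The index js = (j_1,...,j_r) is a list of length r.\<close>
definition Qt :: "nat \<Rightarrow> real \<Rightarrow> nat list \<Rightarrow> box \<times> nat" where
  "Qt d eps js = foldl (\<lambda>(P, t) k. (child d eps t P k, k)) (unit_box, 1) js"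

definition Q :: "nat \<Rightarrow> real \<Rightarrow> nat list \<Rightarrow> box" where
  "Q d eps js = fst (Qt d eps js)"

definition inS :: "nat \<Rightarrow> nat list \<Rightarrow> bool" where
  "inS d js \<longleftrightarrow> sorted js \<and> (\<forall>k\<in>set js. 1 \<le> k \<and> k \<le> d)"

text \<open>Q^{(r)}_js is generated: every proper ancestor has weight > eps (and was hence decomposed).\<close>
definition generated :: "nat \<Rightarrow> real \<Rightarrow> nat list \<Rightarrow> bool" where
  "generated d eps js \<longleftrightarrow> (\<forall>m < length js. W d (Q d eps (take m js)) > eps)"

definition height :: "nat \<Rightarrow> real \<Rightarrow> nat" where
  "height d eps =
     (if W d unit_box \<le> eps then 0
      else Suc (GREATEST m. \<exists>js. length js = m \<and> inS d js \<and> generated d eps js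
                                   \<and> W d (Q d eps js) > eps))"

end

theory Submission imports Defs begin

text \<open>Along a chain of the decomposition the weight and the scaling factor \<open>\<delta>\<close> obey a
  closed recursion: the child of type \<open>k\<close> of a box of weight \<open>w\<close> and factor \<open>x\<close> has weight
  \<open>x w\<close> and factor \<open>x \<cdot> root (d-k+1) ((x w - \<epsilon>) / (x (w - \<epsilon>)))\<close>. This expression increases
  in \<open>w\<close>, in \<open>x\<close> and, since \<open>x < 1\<close> makes the radicand less than \<open>1\<close>, in the root index
  \<open>d-k+1\<close>, i.e. it decreases in \<open>k\<close>. The weight of \<open>Q\<^sub>i\<close> does not depend on the last index \<open>i\<^sub>r\<close>, whence the
  strictness of the first inequality depends only on the first \<open>r-1\<close> indices.\<close>

definition upper_vol :: "nat \<Rightarrow> box \<Rightarrow> real" where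
  "upper_vol d P = (\<Prod>i\<in>{1..d}. snd P i)"

definition delta_denom :: "nat \<Rightarrow> nat \<Rightarrow> box \<Rightarrow> real" where
  "delta_denom d j P = (\<Prod>i\<in>{1..<j}. fst P i) * (\<Prod>i\<in>{j..d}. snd P i)"

definition delta_ratio :: "real \<Rightarrow> real \<Rightarrow> real \<Rightarrow> real" where
  "delta_ratio eps w x = (x * w - eps) / (x * (w - eps))"

definition delta_step :: "real \<Rightarrow> nat \<Rightarrow> real \<Rightarrow> real \<Rightarrow> real" where
  "delta_step eps m w x = x * root m (delta_ratio eps w x)"

lemma delta_eq_root:
  "delta d eps j P = root (d - j + 1) ((upper_vol d P - eps) / delta_denom d j P)"
  by (simp add: delta_def upper_vol_def delta_denom_def)

lemma prod_atLeastAtMost_split: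
  fixes f :: "nat \<Rightarrow> 'a::comm_monoid_mult"
  assumes "j \<le> k" "k \<le> Suc d"
  shows "prod f {j..d} = prod f {j..<k} * prod f {k..d}"
  using prod.atLeastLessThan_concat[of j k "Suc d" f] assms
  by (simp add: atLeastLessThanSuc_atLeastAtMost)

lemma upper_vol_child:
  assumes "j \<le> k" "1 \<le> k" "k \<le> d"
  shows "upper_vol d (child d eps j P k) = delta d eps j P * upper_vol d P"
proof -
  have k: "k \<in> {1..d}" using assms by auto
  have "upper_vol d (child d eps j P k)
      = snd (child d eps j P k) k * (\<Prod>i\<in>{1..d}-{k}. snd (child d eps j P k) i)"
    using k by (simp add: upper_vol_def prod.remove)
  also have "\<dots> = (delta d eps j P * snd P k) * (\<Prod>i\<in>{1..d}-{k}. snd P i)"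
    using assms by (simp add: child_def gamma_def)
  also have "\<dots> = delta d eps j P * upper_vol d P"
    using k by (simp add: upper_vol_def prod.remove)
  finally show ?thesis .
qed

lemma delta_denom_child:
  assumes "1 \<le> j" "j \<le> k" "k \<le> d"
  shows "delta_denom d k (child d eps j P k) = delta d eps j P ^ (k - j + 1) * delta_denom d j P"
proof -
  define x where "x = delta d eps j P"
  define C where "C = child d eps j P k"
  have "(\<Prod>i\<in>{1..<k}. fst C i) = (\<Prod>i\<in>{1..<j}. fst C i) * (\<Prod>i\<in>{j..<k}. fst C i)"
    using assms by (simp add: prod.atLeastLessThan_concat)
  also have "\<dots> = (\<Prod>i\<in>{1..<j}. fst P i) * (\<Prod>i\<in>{j..<k}. x * snd P i)"
    using assms by (auto intro!: arg_cong2[where f = "(*)"] prod.cong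
        simp: C_def child_def gamma_def x_def)
  finally have lower: "(\<Prod>i\<in>{1..<k}. fst C i)
      = (\<Prod>i\<in>{1..<j}. fst P i) * (x ^ (k - j) * (\<Prod>i\<in>{j..<k}. snd P i))"
    by (simp add: prod.distrib)
  have "(\<Prod>i\<in>{k..d}. snd C i) = snd C k * (\<Prod>i\<in>{Suc k..d}. snd C i)"
    using assms by (simp add: prod.atLeast_Suc_atMost)
  also have "\<dots> = x * (snd P k * (\<Prod>i\<in>{Suc k..d}. snd P i))"
    using assms by (auto intro!: prod.cong simp: C_def child_def gamma_def x_def)
  also have "\<dots> = x * (\<Prod>i\<in>{k..d}. snd P i)"
    using assms by (simp add: prod.atLeast_Suc_atMost)
  finally have upper: "(\<Prod>i\<in>{k..d}. snd C i) = x * (\<Prod>i\<in>{k..d}. snd P i)" .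
  have "(\<Prod>i\<in>{j..d}. snd P i) = (\<Prod>i\<in>{j..<k}. snd P i) * (\<Prod>i\<in>{k..d}. snd P i)"
    using assms by (intro prod_atLeastAtMost_split) auto
  moreover have "x ^ (k - j + 1) = x ^ (k - j) * x" by simp
  ultimately show ?thesis
    unfolding delta_denom_def C_def[symmetric] x_def[symmetric] lower upper
    by (simp add: algebra_simps)
qed

text \<open>Eliminating the parent's denominator through \<open>x\<^bsup>d-j+1\<^esup> = (w - \<epsilon>) / q\<close>
  expresses the child's factor by the parent's weight and factor alone.\<close>

lemma delta_child:
  assumes "1 \<le> j" "j \<le> k" "k \<le> d" "0 < delta_denom d j P" "eps < upper_vol d P"
  shows "delta d eps k (child d eps j P k) = delta_step eps (d - k + 1) (upper_vol d P) (delta d eps j P)"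
proof -
  define x where "x = delta d eps j P"
  define w where "w = upper_vol d P"
  define q where "q = delta_denom d j P"
  obtain n1 n2 where n: "k - j = n1" "d - k = n2" by blast
  have exps: "d - j + 1 = n1 + n2 + 1" "k - j + 1 = n1 + 1" "d - k + 1 = n2 + 1"
    using n assms by auto
  have x_root: "x = root (d - j + 1) ((w - eps) / q)"
    by (simp add: x_def w_def q_def delta_eq_root)
  have x: "0 < x" unfolding x_root using assms by (simp add: w_def q_def)
  have "x ^ (d - j + 1) = (w - eps) / q"
    unfolding x_root using assms by (intro real_root_pow_pos2) (auto simp: w_def q_def)
  then have q: "q = (w - eps) / x ^ (n1 + n2 + 1)"
    using x assms unfolding exps by (simp add: field_simps w_def q_def)
  have "delta d eps k (child d eps j P k) = root (d - k + 1) ((x * w - eps) / (x ^ (k - j + 1) * q))"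
    using assms by (simp add: delta_eq_root upper_vol_child delta_denom_child x_def w_def q_def)
  also have "\<dots> = root (n2 + 1) ((x * w - eps) / (x ^ (n1 + 1) * q))"
    by (simp only: exps)
  also have "(x * w - eps) / (x ^ (n1 + 1) * q) = x ^ (n2 + 1) * delta_ratio eps w x"
    unfolding q delta_ratio_def using x assms by (simp add: field_simps power_add w_def)
  also have "root (n2 + 1) \<dots> = x * root (n2 + 1) (delta_ratio eps w x)"
    unfolding real_root_mult using real_root_power_cancel[of "n2 + 1" x] x by simp
  finally show ?thesis by (simp add: delta_step_def n x_def w_def)
qed

lemma delta_ratio_eq:
  "0 < x \<Longrightarrow> eps < w \<Longrightarrow> delta_ratio eps w x = 1 - eps * (1 / x - 1) / (w - eps)"
  by (simp add: delta_ratio_def field_simps)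

lemma delta_ratio_pos_less_one:
  assumes "0 < eps" "0 < x" "x < 1" "eps < x * w"
  shows "0 < delta_ratio eps w x" "delta_ratio eps w x < 1"
proof -
  have "0 < w" using assms zero_less_mult_pos[of x w] by linarith
  then have "x * w < w" using assms mult_strict_right_mono[of x 1 w] by simp
  then show "0 < delta_ratio eps w x"
    unfolding delta_ratio_def using assms by (intro divide_pos_pos) auto
  show "delta_ratio eps w x < 1"
    using assms \<open>x * w < w\<close> by (simp add: delta_ratio_eq)
qed

lemma delta_ratio_mono:
  assumes "0 < eps" "eps < w'" "w' \<le> w" "0 < x'" "x' \<le> x" "x < 1"
  shows "delta_ratio eps w' x' \<le> delta_ratio eps w x"
proof -
  have "1 / x \<le> 1 / x'" "1 < 1 / x" using assms by (auto simp: frac_le)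
  then have "eps * (1 / x - 1) / (w - eps) \<le> eps * (1 / x' - 1) / (w' - eps)"
    using assms by (intro frac_le mult_left_mono) auto
  then show ?thesis using assms by (simp add: delta_ratio_eq)
qed

lemma delta_step_pos_less:
  assumes "0 < eps" "1 \<le> m" "0 < x" "x < 1" "eps < x * w"
  shows "0 < delta_step eps m w x" "delta_step eps m w x < x"
  using delta_ratio_pos_less_one[OF assms(1,3-5)] assms(2-4)
  by (simp_all add: delta_step_def real_root_gt_zero)

lemma delta_step_mono:
  assumes "0 < eps" "1 \<le> m'" "m' \<le> m" "w' \<le> w" "0 < x'" "x' \<le> x" "x < 1" "eps < x' * w'"
  shows "delta_step eps m' w' x' \<le> delta_step eps m w x"
    and "m' < m \<or> x' < x \<Longrightarrow> delta_step eps m' w' x' < delta_step eps m w x"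
proof -
  define r where "r = delta_ratio eps w x"
  define r' where "r' = delta_ratio eps w' x'"
  have "0 < w'" using assms zero_less_mult_pos[of x' w'] by linarith
  then have "x' * w' < w'" using assms mult_strict_right_mono[of x' 1 w'] by simp
  then have w': "eps < w'" using assms by linarith
  have r': "0 < r'" unfolding r'_def using assms by (intro delta_ratio_pos_less_one) auto
  have r'r: "r' \<le> r" unfolding r_def r'_def using assms w' by (intro delta_ratio_mono) auto
  have "x' * w' \<le> x * w" using assms w' by (intro mult_mono) auto
  then have r: "r < 1" unfolding r_def using assms by (intro delta_ratio_pos_less_one) auto
  have root_m: "root m' r \<le> root m r" and root_r: "root m' r' \<le> root m' r"
    using assms r' r'r r by (auto intro: real_root_increasing real_root_le_mono)
  have root_pos: "0 < root m' r'" using assms r' by (simp add: real_root_gt_zero)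
  have root_le: "root m' r' \<le> root m r" using root_m root_r by linarith
  then show "delta_step eps m' w' x' \<le> delta_step eps m w x"
    unfolding delta_step_def r_def[symmetric] r'_def[symmetric]
    using root_pos assms by (intro mult_mono) auto
  assume "m' < m \<or> x' < x"
  then show "delta_step eps m' w' x' < delta_step eps m w x"
    unfolding delta_step_def r_def[symmetric] r'_def[symmetric]
  proof
    assume "m' < m"
    then have "root m' r < root m r" using assms r' r'r r by (intro real_root_strict_increasing) auto
    then have "root m' r' < root m r" using root_r by linarith
    then show "x' * root m' r' < x * root m r"
      using root_pos assms by (intro mult_le_less_imp_less) auto
  next
    assume "x' < x"
    then show "x' * root m' r' < x * root m r"
      using root_le root_pos assms by (intro mult_less_le_imp_less) auto
  qed
qed

definition Q_type :: "nat list \<Rightarrow> nat" where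
  "Q_type js = (if js = [] then 1 else last js)"

definition Q_delta :: "nat \<Rightarrow> real \<Rightarrow> nat list \<Rightarrow> real" where
  "Q_delta d eps js = delta d eps (Q_type js) (Q d eps js)"

lemma Q_type_Nil [simp]: "Q_type [] = 1"
  by (simp add: Q_type_def)

lemma Q_type_snoc [simp]: "Q_type (js @ [k]) = k"
  by (simp add: Q_type_def)

lemma Qt_snoc: "Qt d eps (js @ [k]) = (child d eps (Q_type js) (Q d eps js) k, k)"
proof -
  have "snd (Qt d eps js) = Q_type js"
    by (cases js rule: rev_cases) (simp_all add: Qt_def Q_type_def split: prod.split)
  then have "Qt d eps js = (Q d eps js, Q_type js)"
    by (simp add: Q_def prod_eq_iff)
  moreover have "Qt d eps (js @ [k]) = (case Qt d eps js of (P, t) \<Rightarrow> (child d eps t P k, k))"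
    by (simp add: Qt_def split: prod.split)
  ultimately show ?thesis by simp
qed

lemma Q_Nil [simp]: "Q d eps [] = unit_box"
  by (simp add: Q_def Qt_def)

lemma Q_snoc: "Q d eps (js @ [k]) = child d eps (Q_type js) (Q d eps js) k"
  by (simp add: Q_def Qt_snoc)

lemma W_unit_box: "W d unit_box = (if d = 0 then 0 else 1)"
  by (simp add: W_def unit_box_def)

lemma inS_snocD:
  "inS d (js @ [k]) \<Longrightarrow> inS d js \<and> 1 \<le> Q_type js \<and> Q_type js \<le> k \<and> k \<le> d"
  by (cases js rule: rev_cases) (auto simp: inS_def sorted_append Q_type_def)

lemma generated_snoc_iff:
  "generated d eps (js @ [k]) \<longleftrightarrow> generated d eps js \<and> eps < W d (Q d eps js)"
  by (auto simp: generated_def less_Suc_eq)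

lemma fst_Q_eq_0: "inS d js \<Longrightarrow> Q_type js \<le> i \<Longrightarrow> fst (Q d eps js) i = 0"
proof (induction js arbitrary: i rule: rev_induct)
  case Nil
  then show ?case by (simp add: unit_box_def)
next
  case (snoc k js)
  then show ?case using inS_snocD[OF snoc.prems(1)] by (simp add: Q_snoc child_def)
qed

lemma W_Q_eq_upper_vol:
  assumes "inS d js" "1 \<le> d"
  shows "W d (Q d eps js) = upper_vol d (Q d eps js)"
proof -
  have "Q_type js \<in> {1..d}"
    using assms by (cases js rule: rev_cases) (auto simp: inS_def Q_type_def)
  then have "(\<Prod>i\<in>{1..d}. fst (Q d eps js) i) = 0"
    using fst_Q_eq_0[OF assms(1) order_refl, where eps = eps] by (auto intro: prod_zero)
  then show ?thesis by (simp add: W_def upper_vol_def)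
qed

lemma W_Q_snoc:
  assumes "inS d (js @ [k])"
  shows "W d (Q d eps (js @ [k])) = Q_delta d eps js * W d (Q d eps js)"
proof -
  have "inS d js" "Q_type js \<le> k" "1 \<le> k" "k \<le> d"
    using inS_snocD[OF assms] by auto
  then show ?thesis
    using W_Q_eq_upper_vol[OF assms] W_Q_eq_upper_vol[of d js]
    by (simp add: Q_snoc upper_vol_child Q_delta_def)
qed

lemma delta_denom_Q_pos:
  "inS d js \<Longrightarrow> generated d eps js \<Longrightarrow> 0 < delta_denom d (Q_type js) (Q d eps js)"
proof (induction js rule: rev_induct)
  case Nil
  then show ?case by (simp add: delta_denom_def unit_box_def)
next
  case (snoc k js)
  have js: "inS d js" "1 \<le> Q_type js" "Q_type js \<le> k" "k \<le> d"
    using inS_snocD[OF snoc.prems(1)] by auto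
  have "generated d eps js" "eps < W d (Q d eps js)"
    using snoc.prems(2) by (auto simp: generated_snoc_iff)
  with snoc.IH js have q: "0 < delta_denom d (Q_type js) (Q d eps js)"
    and w: "eps < upper_vol d (Q d eps js)"
    by (auto simp: W_Q_eq_upper_vol)
  then have "0 < Q_delta d eps js"
    by (simp add: Q_delta_def delta_eq_root)
  then show ?case
    using q js by (simp add: Q_snoc delta_denom_child Q_delta_def)
qed

lemma Q_delta_snoc:
  assumes "inS d (js @ [k])" "generated d eps (js @ [k])"
  shows "Q_delta d eps (js @ [k]) = delta_step eps (d - k + 1) (W d (Q d eps js)) (Q_delta d eps js)"
proof -
  have js: "inS d js" "1 \<le> Q_type js" "Q_type js \<le> k" "k \<le> d"
    using inS_snocD[OF assms(1)] by auto
  have "generated d eps js" "eps < W d (Q d eps js)"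
    using assms(2) by (auto simp: generated_snoc_iff)
  with js show ?thesis
    by (simp add: Q_delta_def Q_snoc W_Q_eq_upper_vol delta_child delta_denom_Q_pos)
qed

lemma Q_delta_pos_less_one:
  "inS d js \<Longrightarrow> generated d eps js \<Longrightarrow> 0 < eps \<Longrightarrow> eps < W d (Q d eps js)
    \<Longrightarrow> 0 < Q_delta d eps js \<and> Q_delta d eps js < 1"
proof (induction js rule: rev_induct)
  case Nil
  then have "0 < d" "eps < 1" by (auto simp: W_unit_box split: if_splits)
  with Nil.prems show ?case
    by (simp add: Q_delta_def delta_eq_root upper_vol_def delta_denom_def unit_box_def)
next
  case (snoc k js)
  have "generated d eps js" "eps < W d (Q d eps js)"
    using snoc.prems(2) by (auto simp: generated_snoc_iff)
  then have "0 < Q_delta d eps js" "Q_delta d eps js < 1"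
    using snoc inS_snocD[OF snoc.prems(1)] by auto
  moreover have "eps < Q_delta d eps js * W d (Q d eps js)"
    using snoc.prems(1,4) by (simp add: W_Q_snoc)
  ultimately show ?case
    using delta_step_pos_less[of eps "d - k + 1" "Q_delta d eps js" "W d (Q d eps js)"] snoc.prems
    by (auto simp: Q_delta_snoc)
qed

lemma Q_weight_delta_mono:
  assumes "list_all2 (\<le>) iv jv" "inS d iv" "inS d jv" "generated d eps iv" "generated d eps jv"
    "0 < eps"
  shows "W d (Q d eps jv) \<le> W d (Q d eps iv) \<and>
    (eps < W d (Q d eps jv) \<longrightarrow> Q_delta d eps jv \<le> Q_delta d eps iv \<and>
       (iv \<noteq> jv \<longrightarrow> Q_delta d eps jv < Q_delta d eps iv))"
  using assms
proof (induction iv arbitrary: jv rule: rev_induct)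
  case Nil
  then show ?case by simp
next
  case (snoc a iv)
  obtain jv' b where jv: "jv = jv' @ [b]" and le: "list_all2 (\<le>) iv jv'" "a \<le> b"
    using snoc.prems(1) by (auto simp: list_all2_append1 list_all2_Cons1)
  have iv: "inS d iv" "a \<le> d" and jv': "inS d jv'" "b \<le> d"
    using inS_snocD snoc.prems(2,3) jv by blast+
  have gen: "generated d eps iv" "eps < W d (Q d eps iv)"
    "generated d eps jv'" "eps < W d (Q d eps jv')"
    using snoc.prems(4,5) jv by (auto simp: generated_snoc_iff)
  have IH: "W d (Q d eps jv') \<le> W d (Q d eps iv)" "Q_delta d eps jv' \<le> Q_delta d eps iv"
    "iv \<noteq> jv' \<Longrightarrow> Q_delta d eps jv' < Q_delta d eps iv"
    using snoc.IH[OF le(1) iv(1) jv'(1) gen(1,3) snoc.prems(6)] gen(4) by auto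
  have "0 < Q_delta d eps jv'" "Q_delta d eps iv < 1"
    using Q_delta_pos_less_one iv(1) jv'(1) gen snoc.prems(6) by blast+
  note deltas = this IH(2,3)
  have W: "W d (Q d eps (iv @ [a])) = Q_delta d eps iv * W d (Q d eps iv)"
    "W d (Q d eps jv) = Q_delta d eps jv' * W d (Q d eps jv')"
    using W_Q_snoc snoc.prems(2,3) jv by blast+
  have "W d (Q d eps jv) \<le> W d (Q d eps (iv @ [a]))"
    unfolding W using deltas IH(1) gen(4) snoc.prems(6) by (intro mult_mono) auto
  moreover have "Q_delta d eps jv \<le> Q_delta d eps (iv @ [a]) \<and>
      (iv @ [a] \<noteq> jv \<longrightarrow> Q_delta d eps jv < Q_delta d eps (iv @ [a]))"
    if "eps < W d (Q d eps jv)"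
  proof -
    have step: "Q_delta d eps (iv @ [a])
        = delta_step eps (d - a + 1) (W d (Q d eps iv)) (Q_delta d eps iv)"
      "Q_delta d eps jv = delta_step eps (d - b + 1) (W d (Q d eps jv')) (Q_delta d eps jv')"
      using Q_delta_snoc snoc.prems(2-5) jv by blast+
    have "1 \<le> d - b + 1" "d - b + 1 \<le> d - a + 1"
      "eps < Q_delta d eps jv' * W d (Q d eps jv')"
      using le(2) that W(2) by auto
    note mono = delta_step_mono[OF snoc.prems(6) this(1,2) IH(1) deltas(1,3,2) this(3)]
    have "iv @ [a] \<noteq> jv \<Longrightarrow> d - b + 1 < d - a + 1 \<or> Q_delta d eps jv' < Q_delta d eps iv"
      using deltas(4) le(2) jv'(2) jv by (cases "iv = jv'") auto
    then show ?thesis unfolding step using mono by blast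
  qed
  ultimately show ?case by blast
qed

lemma W_Q_less_iff:
  assumes "list_all2 (\<le>) iv jv" "inS d iv" "inS d jv" "generated d eps iv" "generated d eps jv"
    "0 < eps"
  shows "W d (Q d eps jv) < W d (Q d eps iv) \<longleftrightarrow> butlast iv \<noteq> butlast jv"
proof (cases "iv = []")
  case True
  then show ?thesis using assms(1) by simp
next
  case False
  then obtain iv' a jv' b where iv: "iv = iv' @ [a]" and jv: "jv = jv' @ [b]"
    and le: "list_all2 (\<le>) iv' jv'"
    using assms(1) by (cases iv rule: rev_cases) (auto simp: list_all2_append1 list_all2_Cons1)
  have S: "inS d iv'" "inS d jv'" using assms(2,3) iv jv inS_snocD by blast+
  have gen: "generated d eps iv'" "generated d eps jv'" "eps < W d (Q d eps jv')"
    using assms(4,5) iv jv by (auto simp: generated_snoc_iff)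
  have W: "W d (Q d eps iv) = Q_delta d eps iv' * W d (Q d eps iv')"
    "W d (Q d eps jv) = Q_delta d eps jv' * W d (Q d eps jv')"
    using W_Q_snoc assms(2,3) iv jv by blast+
  have "0 < Q_delta d eps jv'"
    using Q_delta_pos_less_one S(2) gen(2,3) assms(6) by blast
  moreover have "W d (Q d eps jv') \<le> W d (Q d eps iv')"
    "iv' \<noteq> jv' \<Longrightarrow> Q_delta d eps jv' < Q_delta d eps iv'"
    using Q_weight_delta_mono[OF le S gen(1,2) assms(6)] gen(3) by auto
  ultimately have "iv' \<noteq> jv' \<Longrightarrow> W d (Q d eps jv) < W d (Q d eps iv)"
    unfolding W using gen(3) assms(6) by (intro mult_less_le_imp_less) auto
  moreover have "iv' = jv' \<Longrightarrow> W d (Q d eps jv) = W d (Q d eps iv)"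
    unfolding W by simp
  ultimately show ?thesis using iv jv by force
qed

lemma list_all2_le_neq_iff:
  fixes xs ys :: "'a::linorder list"
  assumes "list_all2 (\<le>) xs ys"
  shows "xs \<noteq> ys \<longleftrightarrow> (\<exists>i < length xs. xs ! i < ys ! i)"
proof -
  have len: "length xs = length ys" and le: "\<forall>i < length xs. xs ! i \<le> ys ! i"
    using assms by (auto simp: list_all2_conv_all_nth)
  then have "xs \<noteq> ys \<longleftrightarrow> (\<exists>i < length xs. xs ! i \<noteq> ys ! i)"
    by (simp add: list_eq_iff_nth_eq)
  also have "\<dots> \<longleftrightarrow> (\<exists>i < length xs. xs ! i < ys ! i)"
    using le by (auto intro: order.not_eq_order_implies_strict dest: order.strict_implies_not_eq)
  finally show ?thesis .
qed

theorem mainTheorem2: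
  fixes d :: nat and eps :: real and r :: nat and iv jv :: "nat list"
  assumes "1 \<le> d" and "0 < eps" and "eps \<le> 1"
    and "1 \<le> r" and "r \<le> height d eps"
    and "length iv = r" and "length jv = r"
    and "inS d iv" and "inS d jv"
    and "\<forall>\<nu> < r. iv ! \<nu> \<le> jv ! \<nu>"
    and "generated d eps iv" and "generated d eps jv"
  shows "W d (Q d eps iv) \<ge> W d (Q d eps jv)
     \<and> (W d (Q d eps jv) > eps \<longrightarrow>
          delta d eps (last iv) (Q d eps iv) \<ge> delta d eps (last jv) (Q d eps jv))
     \<and> (W d (Q d eps iv) > W d (Q d eps jv) \<longleftrightarrow> (\<exists>\<nu> < r - 1. iv ! \<nu> < jv ! \<nu>))
     \<and> (W d (Q d eps jv) > eps \<longrightarrow>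
          (delta d eps (last iv) (Q d eps iv) > delta d eps (last jv) (Q d eps jv)
             \<longleftrightarrow> (\<exists>\<nu> < r. iv ! \<nu> < jv ! \<nu>)))"
proof -
  have le: "list_all2 (\<le>) iv jv" and le_butlast: "list_all2 (\<le>) (butlast iv) (butlast jv)"
    using assms(6,7,10) by (simp_all add: list_all2_conv_all_nth nth_butlast)
  have "iv \<noteq> []" "jv \<noteq> []" using assms(4,6,7) by auto
  then have delta_last: "delta d eps (last iv) (Q d eps iv) = Q_delta d eps iv"
    "delta d eps (last jv) (Q d eps jv) = Q_delta d eps jv"
    by (simp_all add: Q_delta_def Q_type_def)
  have "(\<exists>\<nu> < r - 1. iv ! \<nu> < jv ! \<nu>) \<longleftrightarrow> (\<exists>\<nu> < r - 1. butlast iv ! \<nu> < butlast jv ! \<nu>)"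
    using assms(6,7) by (auto simp: nth_butlast)
  then have "W d (Q d eps jv) < W d (Q d eps iv) \<longleftrightarrow> (\<exists>\<nu> < r - 1. iv ! \<nu> < jv ! \<nu>)"
    using W_Q_less_iff[OF le assms(8,9,11,12,2)] list_all2_le_neq_iff[OF le_butlast] assms(6)
    by simp
  moreover have "iv \<noteq> jv \<longleftrightarrow> (\<exists>\<nu> < r. iv ! \<nu> < jv ! \<nu>)"
    using list_all2_le_neq_iff[OF le] assms(6) by simp
  ultimately show ?thesis
    using Q_weight_delta_mono[OF le assms(8,9,11,12,2)] unfolding delta_last by auto
qed

end
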